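(* Let $(M,g)$ be a Riemannian manifold, $F_1,\dots,F_k,G:M\to\mathbb{R}$ smooth, $c$ a regular value of $\mathbf{F}=(F_1,\dots,F_k):M\to\mathbb{R}^k$ and $L_c=\mathbf{F}^{-1}(c)$. Then for every $x\in L_c$, $$\mathbf{v}_0(x)=\det\Sigma_{(F_1,\dots,F_k)}^{(F_1,\dots,F_k)}(x)\,P_{T_xL_c}(\nabla G(x)),$$ where $P_{T_xL_c}:T_xM\to T_xM$ is the $g$-orthogonal projection of $T_xM$ onto $T_xL_c=\ker D\mathbf{F}(x)$ along its orthogonal complement $\mathrm{Sp}[\nabla F_1(x),\dots,\nabla F_k(x)]$.
   Context: $\langle\cdot,\cdot\rangle$ is the inner product of $g$, $\nabla$ the gradient. $\Sigma_{(g_1,\dots,g_s)}^{(f_1,\dots,f_r)}$ is the $r\times s$ matrix with entry $\langle\nabla g_b,\nabla f_a\rangle$ in row $a$, column $b$; $\widehat{\cdot}$ denotes omission; empty determinant is $1$. The standard control vector field is $$\mathbf{v_0}=\sum_{i=1}^k(-1)^{i+k+1}\det\Sigma_{(F_1,\dots,\widehat{F_i},\dots,F_k,G)}^{(F_1,\dots,F_k)}\nabla F_i+\det\Sigma_{(F_1,\dots,F_k)}^{(F_1,\dots,F_k)}\nabla G.$$ *)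

theory Defs
  imports "HOL-Analysis.Analysis" "Jordan_Normal_Form.Determinant"
begin

text \<open>Pointwise (tangent-space) setting. The tangent space T_xM is a finite-dimensional
real vector space of type 'v carrying the inner product g_x (an arbitrary symmetric,
bilinear, positive definite form g). Gradients of F_1..F_k at x are gF 0 .. gF (k-1),
the gradient of G at x is gG. Indices are 0-based.\<close>

definition inner_product_form :: "('v::euclidean_space \<Rightarrow> 'v \<Rightarrow> real) \<Rightarrow> bool" where
  "inner_product_form g \<longleftrightarrow> bilinear g \<and> (\<forall>u v. g u v = g v u) \<and> (\<forall>v. v \<noteq> 0 \<longrightarrow> g v v > 0)"

definition Sigma_mat :: "('v \<Rightarrow> 'v \<Rightarrow> real) \<Rightarrow> (nat \<Rightarrow> 'v) \<Rightarrow> nat \<Rightarrow> (nat \<Rightarrow> 'v) \<Rightarrow> nat \<Rightarrow> real Matrix.mat" where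
  "Sigma_mat g fs r hs s = Matrix.mat r s (\<lambda>(a, b). g (hs b) (fs a))"

text \<open>The list (F_1,..,F_i omitted,..,F_k,G) (0-based omitted index i < k), as gradients.\<close>
definition omit_then :: "(nat \<Rightarrow> 'v) \<Rightarrow> nat \<Rightarrow> nat \<Rightarrow> 'v \<Rightarrow> nat \<Rightarrow> 'v" where
  "omit_then gF k i gG b = (if b < i then gF b else if b < k - 1 then gF (Suc b) else gG)"

text \<open>Standard control vector field v_0 at the point (1-based index i+1, sign (-1)^((i+1)+k+1)).\<close>
definition control_v0 :: "('v::euclidean_space \<Rightarrow> 'v \<Rightarrow> real) \<Rightarrow> (nat \<Rightarrow> 'v) \<Rightarrow> 'v \<Rightarrow> nat \<Rightarrow> 'v" where
  "control_v0 g gF gG k =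
     (\<Sum>i<k. ((-1) ^ (i + k) * Determinant.det (Sigma_mat g gF k (omit_then gF k i gG) k)) *\<^sub>R gF i)
     + Determinant.det (Sigma_mat g gF k gF k) *\<^sub>R gG"

definition orth_proj :: "('v::euclidean_space \<Rightarrow> 'v \<Rightarrow> real) \<Rightarrow> 'v set \<Rightarrow> 'v \<Rightarrow> 'v" where
  "orth_proj g K w = (THE p. p \<in> K \<and> (\<forall>u\<in>K. g (w - p) u = 0))"

text \<open>Tangent space of the level set: ker DF(x), where DF(x) v = (g(grad F_i, v))_i.\<close>
definition level_tangent :: "('v::euclidean_space \<Rightarrow> 'v \<Rightarrow> real) \<Rightarrow> (nat \<Rightarrow> 'v) \<Rightarrow> nat \<Rightarrow> 'v set" where
  "level_tangent g gF k = {v. \<forall>i<k. g (gF i) v = 0}"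

end

theory Submission
  imports Defs
begin

text \<open>The Gram matrix \<open>\<Sigma>\<close> of \<open>\<nabla>F\<^sub>1, \<dots>, \<nabla>F\<^sub>k\<close> is invertible, because regularity of \<open>c\<close>
makes the gradients linearly independent. Solving \<open>\<Sigma> x = (\<langle>\<nabla>G, \<nabla>F\<^sub>a\<rangle>)\<^sub>a\<close> gives
\<open>P(\<nabla>G) = \<nabla>G - \<Sum>\<^sub>i x\<^sub>i \<nabla>F\<^sub>i\<close>. By Cramer's rule \<open>x\<^sub>i det \<Sigma>\<close> is the determinant of \<open>\<Sigma>\<close> with its
\<open>i\<close>-th column replaced by the right-hand side; moving that column to the last place
turns it into the minor with \<open>F\<^sub>i\<close> omitted and \<open>G\<close> appended, at the cost of the sign
\<open>(-1)^(k-1-i)\<close>, which cancels against the sign in \<open>v\<^sub>0\<close>.\<close>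

lemma bilinear_sum_left: "bilinear h \<Longrightarrow> h (sum f S) y = (\<Sum>i\<in>S. h (f i) y)"
  using bilinear_sum[of h f S "\<lambda>_. y" "{()}"] by (simp add: sum.cartesian_product[symmetric])

lemma bilinear_sum_right: "bilinear h \<Longrightarrow> h y (sum f S) = (\<Sum>i\<in>S. h y (f i))"
  using bilinear_sum[of h "\<lambda>_. y" "{()}" f S] by (simp add: sum.cartesian_product[symmetric])

lemma inner_product_form_self_eq_0:
  "inner_product_form g \<Longrightarrow> g v v = 0 \<longleftrightarrow> v = 0"
  unfolding inner_product_form_def using bilinear_lzero by fastforce

lemma Sigma_mat_mult_vec_nth:
  assumes "bilinear g" "a < r" "x \<in> carrier_vec s"
  shows "(Sigma_mat g fs r hs s *\<^sub>v x) $ a = g (\<Sum>b<s. (x $ b) *\<^sub>R hs b) (fs a)"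
  using assms
  by (auto simp: Sigma_mat_def mult_mat_vec_def scalar_prod_def Matrix.row_def atLeast0LessThan
      bilinear_sum_left bilinear_lmul mult.commute intro!: sum.cong)

lemma det_Sigma_mat_gram_nonzero:
  assumes g: "inner_product_form g"
    and regular: "\<forall>y::nat \<Rightarrow> real. \<exists>v. \<forall>i<k. g (gF i) v = y i"
  shows "Determinant.det (Sigma_mat g gF k gF k) \<noteq> 0"
proof
  have bl: "bilinear g" using g by (simp add: inner_product_form_def)
  assume "Determinant.det (Sigma_mat g gF k gF k) = 0"
  moreover have "Sigma_mat g gF k gF k \<in> carrier_mat k k" by (simp add: Sigma_mat_def)
  ultimately obtain x
    where x: "x \<in> carrier_vec k" "x \<noteq> 0\<^sub>v k" "Sigma_mat g gF k gF k *\<^sub>v x = 0\<^sub>v k"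
    using det_0_iff_vec_prod_zero_field by blast
  define w where "w = (\<Sum>b<k. (x $ b) *\<^sub>R gF b)"
  have w_perp: "g w (gF a) = 0" if "a < k" for a
    using Sigma_mat_mult_vec_nth[OF bl that x(1), of gF gF] x(3) that by (simp add: w_def)
  have "g w w = 0"
    by (subst (2) w_def) (simp add: bilinear_sum_right[OF bl] bilinear_rmul[OF bl] w_perp)
  then have "w = 0" using g inner_product_form_self_eq_0 by blast
  obtain v where v: "\<forall>i<k. g (gF i) v = x $ i" using regular by blast
  have "(\<Sum>b<k. (x $ b)\<^sup>2) = g w v"
    unfolding w_def by (simp add: bilinear_sum_left[OF bl] bilinear_lmul[OF bl] v power2_eq_square)
  also have "\<dots> = 0" using \<open>w = 0\<close> bilinear_lzero[OF bl] by simp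
  finally have "x = 0\<^sub>v k"
    using x(1) by (intro eq_vecI) (auto simp: sum_nonneg_eq_0_iff)
  with x(2) show False ..
qed

lemma mat_vec_solvable_if_det_nonzero:
  fixes A :: "'a::field Matrix.mat"
  assumes A: "A \<in> carrier_mat n n" and det: "Determinant.det A \<noteq> 0" and r: "r \<in> carrier_vec n"
  obtains x where "x \<in> carrier_vec n" "A *\<^sub>v x = r"
proof
  define x where "x = (1 / Determinant.det A) \<cdot>\<^sub>v (adj_mat A *\<^sub>v r)"
  show "x \<in> carrier_vec n" using adj_mat(1)[OF A] r by (simp add: x_def)
  have "A *\<^sub>v x = (1 / Determinant.det A) \<cdot>\<^sub>v ((A * adj_mat A) *\<^sub>v r)"
    using A adj_mat(1)[OF A] r by (simp add: x_def mult_mat_vec assoc_mult_mat_vec)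
  also have "(A * adj_mat A) *\<^sub>v r = Determinant.det A \<cdot>\<^sub>v r"
    unfolding adj_mat(2)[OF A] using r
    by (intro eq_vecI) (auto simp: mult_mat_vec_def scalar_prod_def Matrix.row_def if_distrib
        if_distribR cong: if_cong)
  finally show "A *\<^sub>v x = r" using det by (simp add: smult_smult_assoc)
qed

lemma det_Sigma_mat_omit_then:
  assumes i: "i < k"
  shows "Determinant.det (Sigma_mat g gF k (omit_then gF k i gG) k)
     = (-1) ^ (k - 1 - i) * Determinant.det
         (replace_col (Sigma_mat g gF k gF k) (vec k (\<lambda>a. g gG (gF a))) i)"
proof -
  let ?A = "replace_col (Sigma_mat g gF k gF k) (vec k (\<lambda>a. g gG (gF a))) i"
  have A: "?A \<in> carrier_mat k k" by (simp add: replace_col_def Sigma_mat_def)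
  have k: "k = i + 1 + (k - 1 - i)" using i by simp
  have "mat k k (\<lambda>(a, j). ?A $$ (a, if j < i then j
          else if j < i + (k - 1 - i) then j + 1 else j - (k - 1 - i)))
      = Sigma_mat g gF k (omit_then gF k i gG) k"
    using i by (intro eq_matI) (auto simp: replace_col_def Sigma_mat_def omit_then_def)
  then show ?thesis using det_swap_final_cols[OF A k] by simp
qed

lemma control_v0_eq_solution:
  assumes x: "x \<in> carrier_vec k"
    and sol: "Sigma_mat g gF k gF k *\<^sub>v x = vec k (\<lambda>a. g gG (gF a))"
  shows "control_v0 g gF gG k
           = Determinant.det (Sigma_mat g gF k gF k) *\<^sub>R (gG - (\<Sum>i<k. (x $ i) *\<^sub>R gF i))"
proof -
  let ?d = "Determinant.det (Sigma_mat g gF k gF k)"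
  have M: "Sigma_mat g gF k gF k \<in> carrier_mat k k" by (simp add: Sigma_mat_def)
  have "(-1) ^ (i + k) * Determinant.det (Sigma_mat g gF k (omit_then gF k i gG) k) = - (x $ i * ?d)"
    if i: "i < k" for i
  proof -
    have "(-1::real) ^ (i + k) * (-1) ^ (k - 1 - i) = (-1) ^ Suc (2 * (k - 1))"
      using i by (simp add: power_add[symmetric])
    then have sign: "(-1::real) ^ (i + k) * (-1) ^ (k - 1 - i) = -1" by simp
    have "(-1) ^ (i + k) * Determinant.det (Sigma_mat g gF k (omit_then gF k i gG) k)
        = ((-1) ^ (i + k) * (-1) ^ (k - 1 - i)) * (x $ i * ?d)"
      using det_Sigma_mat_omit_then[OF i, of g gF gG] cramer_lemma_mat[OF M x i, unfolded sol]
      by simp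
    also have "\<dots> = - (x $ i * ?d)" by (simp only: sign)
    finally show ?thesis .
  qed
  then show ?thesis
    by (simp add: control_v0_def scaleR_diff_right scaleR_sum_right sum_negf mult.commute)
qed

lemma orth_proj_eqI:
  assumes g: "inner_product_form g" and K: "subspace K"
    and p: "p \<in> K" and perp: "\<forall>u\<in>K. g (w - p) u = 0"
  shows "orth_proj g K w = p"
  unfolding orth_proj_def
proof (rule the_equality)
  show "p \<in> K \<and> (\<forall>u\<in>K. g (w - p) u = 0)" using p perp by simp
next
  have bl: "bilinear g" using g by (simp add: inner_product_form_def)
  fix q assume q: "q \<in> K \<and> (\<forall>u\<in>K. g (w - q) u = 0)"
  then have "p - q \<in> K" using K p by (simp add: subspace_diff)
  then have "g (w - q) (p - q) - g (w - p) (p - q) = 0" using q perp by simp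
  then have "g (p - q) (p - q) = 0"
    by (simp add: bilinear_lsub[OF bl] bilinear_rsub[OF bl] algebra_simps)
  then show "q = p" using g inner_product_form_self_eq_0 by fastforce
qed

lemma subspace_level_tangent: "bilinear g \<Longrightarrow> subspace (level_tangent g gF k)"
  by (auto simp: subspace_def level_tangent_def bilinear_rzero bilinear_radd bilinear_rmul)

lemma orth_proj_level_tangent_solution:
  assumes g: "inner_product_form g" and x: "x \<in> carrier_vec k"
    and sol: "Sigma_mat g gF k gF k *\<^sub>v x = vec k (\<lambda>a. g gG (gF a))"
  shows "orth_proj g (level_tangent g gF k) gG = gG - (\<Sum>i<k. (x $ i) *\<^sub>R gF i)"
proof (rule orth_proj_eqI[OF g])
  have bl: "bilinear g" and sym: "\<And>u v. g u v = g v u"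
    using g by (auto simp: inner_product_form_def)
  show "subspace (level_tangent g gF k)" by (rule subspace_level_tangent[OF bl])
  have "g (gF a) (gG - (\<Sum>i<k. (x $ i) *\<^sub>R gF i)) = 0" if a: "a < k" for a
    using Sigma_mat_mult_vec_nth[OF bl a x, of gF gF] sol a
    by (simp add: bilinear_rsub[OF bl] sym[of "gF a"])
  then show "gG - (\<Sum>i<k. (x $ i) *\<^sub>R gF i) \<in> level_tangent g gF k"
    by (simp add: level_tangent_def)
  show "\<forall>u\<in>level_tangent g gF k. g (gG - (gG - (\<Sum>i<k. (x $ i) *\<^sub>R gF i))) u = 0"
    by (simp add: level_tangent_def bilinear_sum_left[OF bl] bilinear_lmul[OF bl])
qed

theorem theorem5p2:
  fixes g :: "'v::euclidean_space \<Rightarrow> 'v \<Rightarrow> real"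
    and gF :: "nat \<Rightarrow> 'v" and gG :: 'v and k :: nat
  assumes "inner_product_form g"
    and regular: "\<forall>y::nat \<Rightarrow> real. \<exists>v. \<forall>i<k. g (gF i) v = y i"
  shows "control_v0 g gF gG k
           = Determinant.det (Sigma_mat g gF k gF k) *\<^sub>R orth_proj g (level_tangent g gF k) gG"
proof -
  obtain x where x: "x \<in> carrier_vec k"
    and sol: "Sigma_mat g gF k gF k *\<^sub>v x = vec k (\<lambda>a. g gG (gF a))"
    using mat_vec_solvable_if_det_nonzero det_Sigma_mat_gram_nonzero[OF assms]
    by (metis Sigma_mat_def mat_carrier vec_carrier)
  show ?thesis
    using control_v0_eq_solution[OF x sol] orth_proj_level_tangent_solution[OF assms(1) x sol]
    by simp
qed

end
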